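(* Let $w\in RH_1$ and for $n\in\mathbb{N}$ define $$w_n(t)=\begin{cases}\frac1n,& w(t)\le\frac1n,\\ w(t),&\frac1n\le w(t)\le n,\\ n,& w(t)\ge n.\end{cases}$$ Then $[w_n]_{RH_1}\le[w]_{RH_1}$. Moreover, for every $w\in A_\infty$ the same truncation satisfies $[w_n]_{A_\infty}\le[w]_{A_\infty}$.
   Context: Weights are locally integrable, a.e. positive functions on $\mathbb{R}$; $\langle f\rangle_J=\frac1{|J|}\int_J f$. $[w]_{RH_1}=\sup_J\Big\langle \frac{w}{\langle w\rangle_J}\log\frac{w}{\langle w\rangle_J}\Big\rangle_J$ and $[w]_{A_\infty}=\sup_J\langle w\rangle_Je^{-\langle\log w\rangle_J}$, suprema over intervals $J\subset\mathbb{R}$; $w\in RH_1$ (resp. $A_\infty$) iff the corresponding constant is finite. *)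

theory Defs
  imports "HOL-Analysis.Analysis"
begin

definition weight :: "(real \<Rightarrow> real) \<Rightarrow> bool" where
  "weight w \<longleftrightarrow> w \<in> borel_measurable lborel
     \<and> (\<forall>a b. set_integrable lborel {a..b} w)
     \<and> (AE x in lborel. 0 < w x)"

text \<open>Extended Lebesgue integral over J (positive part minus negative part, in ereal);
  it equals the usual integral when f is integrable on J, and is +/- infinity when
  exactly one of the parts is infinite.\<close>
definition ext_int :: "real set \<Rightarrow> (real \<Rightarrow> real) \<Rightarrow> ereal" where
  "ext_int J f = enn2ereal (\<integral>\<^sup>+ x\<in>J. ennreal (f x) \<partial>lborel)
               - enn2ereal (\<integral>\<^sup>+ x\<in>J. ennreal (- f x) \<partial>lborel)"

definition avg :: "real \<Rightarrow> real \<Rightarrow> (real \<Rightarrow> real) \<Rightarrow> ereal" where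
  "avg a b f = ext_int {a..b} f / ereal (b - a)"

definition RH1_const :: "(real \<Rightarrow> real) \<Rightarrow> ereal" where
  "RH1_const w = (SUP (a, b) \<in> {(a, b). a < b}.
     avg a b (\<lambda>t. (w t / real_of_ereal (avg a b w)) * ln (w t / real_of_ereal (avg a b w))))"

text \<open>exp(-<log w>_J), with exp(+infinity) = infinity.\<close>
definition Ainf_const :: "(real \<Rightarrow> real) \<Rightarrow> ereal" where
  "Ainf_const w = (SUP (a, b) \<in> {(a, b). a < b}.
     (let L = avg a b (\<lambda>t. ln (w t)) in
      if L = - \<infinity> then \<infinity>
      else avg a b w * ereal (exp (- real_of_ereal L))))"

definition RH1 :: "(real \<Rightarrow> real) \<Rightarrow> bool" where
  "RH1 w \<longleftrightarrow> RH1_const w < \<infinity>"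

definition Ainf :: "(real \<Rightarrow> real) \<Rightarrow> bool" where
  "Ainf w \<longleftrightarrow> Ainf_const w < \<infinity>"

definition trunc :: "nat \<Rightarrow> (real \<Rightarrow> real) \<Rightarrow> real \<Rightarrow> real" where
  "trunc n w t = max (1 / real n) (min (real n) (w t))"

end

theory Submission
  imports Defs
begin

text \<open>
  The truncation is \<open>max (1/n) \<circ> min n\<close>, and on every interval each one-sided truncation
  \<open>min c\<close> or \<open>max c\<close> decreases the local constant, so the suprema decrease as well.

  For \<open>RH\<^sub>1\<close>, write \<open>s = f/\<langle>f\<rangle>\<close> and \<open>t = g/\<langle>g\<rangle>\<close> for \<open>g\<close> a one-sided truncation of
  \<open>f\<close> at level \<open>c\<close>. Convexity of \<open>x log x\<close> gives \<open>t log t \<le> s log s - (s - t)(log t + 1)\<close>,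
  and \<open>s - t\<close> has the same sign as \<open>log g - log c\<close>, so \<open>log g\<close> may be replaced by the
  constant \<open>log c\<close>; the resulting linear error term has mean zero since \<open>\<langle>s\<rangle> = \<langle>t\<rangle> = 1\<close>.

  For \<open>A\<^sub>\<infinity>\<close>, one needs \<open>\<langle>log f - log g\<rangle> \<le> log \<langle>f\<rangle> - log \<langle>g\<rangle>\<close>. A tangent line of \<open>log\<close>
  bounds \<open>log f - log g\<close> pointwise by an affine function of \<open>f\<close> and \<open>g\<close>; after averaging,
  \<open>\<langle>min c f\<rangle> \<le> c\<close> (resp. \<open>\<langle>max c f\<rangle> \<ge> c\<close>) closes the estimate.
\<close>

lemma set_nn_integral_ennreal_eq:
  "(\<integral>\<^sup>+ x\<in>J. ennreal (f x) \<partial>M) = (\<integral>\<^sup>+ x. ennreal (indicator J x *\<^sub>R f x) \<partial>M)"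
  by (rule nn_integral_cong) (simp split: split_indicator)

lemma ext_int_eq_set_integral:
  assumes "set_integrable lborel J f"
  shows "ext_int J f = ereal (LINT x:J|lborel. f x)"
proof -
  let ?g = "\<lambda>x. indicator J x *\<^sub>R f x"
  from assms obtain r q where "(\<integral>\<^sup>+ x. ennreal (?g x) \<partial>lborel) = ennreal r"
    "(\<integral>\<^sup>+ x. ennreal (- ?g x) \<partial>lborel) = ennreal q" "integral\<^sup>L lborel ?g = r - q" "0 \<le> r" "0 \<le> q"
    unfolding set_integrable_def by (rule integrableE)
  then show ?thesis
    unfolding ext_int_def set_lebesgue_integral_def set_nn_integral_ennreal_eq
    by (simp add: set_nn_integral_ennreal_eq[where f="\<lambda>x. - f x", simplified])
qed

lemma set_nn_integral_less_top_of_le_abs: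
  fixes g :: "real \<Rightarrow> real"
  assumes g: "set_integrable lborel J g" and le: "AE x\<in>J in lborel. f x \<le> \<bar>g x\<bar>"
  shows "(\<integral>\<^sup>+ x\<in>J. ennreal (f x) \<partial>lborel) < \<infinity>"
proof -
  have "(\<integral>\<^sup>+ x\<in>J. ennreal (f x) \<partial>lborel) \<le> (\<integral>\<^sup>+ x. ennreal (norm (indicator J x *\<^sub>R g x)) \<partial>lborel)"
    using le by (intro nn_integral_mono_AE) (auto elim!: eventually_mono split: split_indicator intro: ennreal_leI)
  also have "\<dots> < \<infinity>"
    using g unfolding set_integrable_def integrable_iff_bounded by simp
  finally show ?thesis .
qed

lemma set_nn_integral_infinite_of_not_integrable:
  assumes "set_borel_measurable lborel J f" "\<not> set_integrable lborel J f"
  shows "(\<integral>\<^sup>+ x\<in>J. ennreal (f x) \<partial>lborel) = \<infinity> \<or> (\<integral>\<^sup>+ x\<in>J. ennreal (- f x) \<partial>lborel) = \<infinity>"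
  using assms unfolding set_integrable_def set_borel_measurable_def real_integrable_def
    set_nn_integral_ennreal_eq set_nn_integral_ennreal_eq[where f="\<lambda>x. - f x", simplified]
  by (auto simp: less_top[symmetric])

lemma ext_int_eq_PInfty:
  assumes f: "set_borel_measurable lborel J f" "\<not> set_integrable lborel J f"
    and g: "set_integrable lborel J g" "AE x\<in>J in lborel. g x \<le> f x"
  shows "ext_int J f = \<infinity>"
proof -
  have "(\<integral>\<^sup>+ x\<in>J. ennreal (- f x) \<partial>lborel) < \<infinity>"
    using g by (intro set_nn_integral_less_top_of_le_abs) (auto elim!: eventually_mono)
  then show ?thesis
    using set_nn_integral_infinite_of_not_integrable[OF f] unfolding ext_int_def
    by (cases "\<integral>\<^sup>+ x\<in>J. ennreal (- f x) \<partial>lborel") auto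
qed

lemma ext_int_eq_MInfty:
  assumes f: "set_borel_measurable lborel J f" "\<not> set_integrable lborel J f"
    and g: "set_integrable lborel J g" "AE x\<in>J in lborel. f x \<le> g x"
  shows "ext_int J f = - \<infinity>"
proof -
  have "(\<integral>\<^sup>+ x\<in>J. ennreal (f x) \<partial>lborel) < \<infinity>"
    using g by (intro set_nn_integral_less_top_of_le_abs) (auto elim!: eventually_mono)
  then show ?thesis
    using set_nn_integral_infinite_of_not_integrable[OF f] unfolding ext_int_def
    by (cases "\<integral>\<^sup>+ x\<in>J. ennreal (f x) \<partial>lborel") auto
qed

definition mean :: "real \<Rightarrow> real \<Rightarrow> (real \<Rightarrow> real) \<Rightarrow> real" where
  "mean a b f = (LINT x:{a..b}|lborel. f x) / (b - a)"

lemma avg_eq_mean: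
  assumes "a < b" "set_integrable lborel {a..b} f"
  shows "avg a b f = ereal (mean a b f)"
  using assms by (simp add: avg_def mean_def ext_int_eq_set_integral)

lemma set_integrable_const_Icc: "set_integrable lborel {a::real..b} (\<lambda>_. c :: real)"
  unfolding set_integrable_def
  by (rule integrableI_bounded_set_indicator[where B="\<bar>c\<bar>"]) (auto simp: emeasure_lborel_Icc_eq)

lemma mean_const: "a < b \<Longrightarrow> mean a b (\<lambda>_. c) = c"
  by (simp add: mean_def set_integral_const emeasure_lborel_Icc_eq)

lemma mean_affine:
  assumes ab: "a < b" and f: "set_integrable lborel {a..b} f" and g: "set_integrable lborel {a..b} g"
  shows "set_integrable lborel {a..b} (\<lambda>x. \<alpha> + \<beta> * f x + \<gamma> * g x)"
    and "mean a b (\<lambda>x. \<alpha> + \<beta> * f x + \<gamma> * g x) = \<alpha> + \<beta> * mean a b f + \<gamma> * mean a b g"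
proof -
  have fg: "set_integrable lborel {a..b} (\<lambda>x. \<beta> * f x + \<gamma> * g x)"
    using f g by (intro set_integral_add(1)) auto
  then show "set_integrable lborel {a..b} (\<lambda>x. \<alpha> + \<beta> * f x + \<gamma> * g x)"
    using set_integral_add(1)[OF set_integrable_const_Icc fg] by (simp add: add.assoc)
  have "(LINT x:{a..b}|lborel. \<alpha> + (\<beta> * f x + \<gamma> * g x))
      = \<alpha> * (b - a) + \<beta> * (LINT x:{a..b}|lborel. f x) + \<gamma> * (LINT x:{a..b}|lborel. g x)"
    using ab f g by (simp add: set_integral_add(2)[OF set_integrable_const_Icc fg]
        set_integral_add(2)[OF set_integrable_mult_right set_integrable_mult_right] set_integral_const)
  then show "mean a b (\<lambda>x. \<alpha> + \<beta> * f x + \<gamma> * g x) = \<alpha> + \<beta> * mean a b f + \<gamma> * mean a b g"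
    using ab by (simp add: mean_def add.assoc add_divide_distrib)
qed

lemma mean_diff:
  assumes "set_integrable lborel {a..b} f" "set_integrable lborel {a..b} g"
  shows "mean a b (\<lambda>x. f x - g x) = mean a b f - mean a b g"
  using assms by (simp add: mean_def set_integral_diff(2) diff_divide_distrib)

lemma mean_mono_AE:
  assumes "a < b" "set_integrable lborel {a..b} f" "set_integrable lborel {a..b} g"
    and "AE x\<in>{a..b} in lborel. f x \<le> g x"
  shows "mean a b f \<le> mean a b g"
  using assms by (simp add: mean_def divide_right_mono set_integral_mono_AE)

lemma mean_pos:
  assumes ab: "a < b" and f: "set_integrable lborel {a..b} f"
    and pos: "AE x\<in>{a..b} in lborel. 0 < f x"
  shows "0 < mean a b f"
proof -
  let ?g = "\<lambda>x. indicator {a..b} x *\<^sub>R f x"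
  have nn: "AE x in lborel. 0 \<le> ?g x"
    using pos by eventually_elim (auto split: split_indicator)
  have "(LINT x:{a..b}|lborel. f x) \<noteq> 0"
  proof
    assume "(LINT x:{a..b}|lborel. f x) = 0"
    then have "AE x in lborel. ?g x = 0"
      using integral_nonneg_eq_0_iff_AE[OF f[unfolded set_integrable_def] nn]
      by (simp add: set_lebesgue_integral_def)
    then have "AE x in lborel. x \<notin> {a..b}"
      using pos by eventually_elim (auto split: split_indicator)
    then show False
      using ab by (subst (asm) AE_iff_measurable[of "{a..b}"]) auto
  qed
  moreover have "0 \<le> (LINT x:{a..b}|lborel. f x)"
    unfolding set_lebesgue_integral_def using nn by (rule integral_nonneg_AE)
  ultimately show ?thesis
    using ab by (simp add: mean_def)
qed

lemma set_integrable_min_const: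
  fixes f :: "real \<Rightarrow> real"
  assumes "f \<in> borel_measurable lborel" "set_integrable lborel {a..b} f"
  shows "set_integrable lborel {a..b} (\<lambda>x. min c (f x))"
  by (rule set_integrable_bound[OF set_integral_add(1)[OF set_integrable_abs[OF assms(2)]
        set_integrable_const_Icc[of a b "\<bar>c\<bar>"]]])
    (use assms(1) in \<open>auto simp: set_borel_measurable_def\<close>)

lemma set_integrable_max_const:
  fixes f :: "real \<Rightarrow> real"
  assumes "f \<in> borel_measurable lborel" "set_integrable lborel {a..b} f"
  shows "set_integrable lborel {a..b} (\<lambda>x. max c (f x))"
  by (rule set_integrable_bound[OF set_integral_add(1)[OF set_integrable_abs[OF assms(2)]
        set_integrable_const_Icc[of a b "\<bar>c\<bar>"]]])
    (use assms(1) in \<open>auto simp: set_borel_measurable_def\<close>)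

lemma xlnx_ge_tangent:
  fixes s t :: real
  assumes "0 < s" "0 < t"
  shows "t * ln t + (s - t) * (ln t + 1) \<le> s * ln s"
proof -
  have "ln (t / s) \<le> t / s - 1"
    using assms by (intro ln_le_minus_one) simp
  then have "s * (ln t - ln s) \<le> s * (t / s - 1)"
    using assms by (intro mult_left_mono) (auto simp: ln_div)
  then show ?thesis
    using assms by (simp add: algebra_simps)
qed

lemma xlnx_le_of_crossing:
  fixes s t d :: real
  assumes "0 < s" "0 < t" "0 \<le> (s - t) * (ln t - d)"
  shows "t * ln t \<le> s * ln s - (s - t) * (d + 1)"
  using xlnx_ge_tangent[OF assms(1,2)] assms(3) by (simp add: algebra_simps)

definition rh_integrand :: "real \<Rightarrow> real \<Rightarrow> (real \<Rightarrow> real) \<Rightarrow> real \<Rightarrow> real" where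
  "rh_integrand a b f x = f x / mean a b f * ln (f x / mean a b f)"

lemma rh_integrand_ge_minus_one:
  assumes "0 < f x" "0 < mean a b f"
  shows "- 1 \<le> rh_integrand a b f x"
proof -
  have "0 < f x / mean a b f"
    using assms by simp
  then show ?thesis
    using xlnx_ge_tangent[of "f x / mean a b f" 1] unfolding rh_integrand_def by simp
qed

lemma rh_integrand_mean_le:
  fixes f g :: "real \<Rightarrow> real"
  assumes ab: "a < b"
    and f: "f \<in> borel_measurable lborel" "set_integrable lborel {a..b} f"
    and g: "g \<in> borel_measurable lborel" "set_integrable lborel {a..b} g"
    and pos: "AE x\<in>{a..b} in lborel. 0 < f x \<and> 0 < g x"
    and cross: "AE x\<in>{a..b} in lborel. 0 \<le> (f x / mean a b f - g x / mean a b g) * (ln (g x) - d)"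
    and F: "set_integrable lborel {a..b} (rh_integrand a b f)"
  shows "set_integrable lborel {a..b} (rh_integrand a b g)"
    and "mean a b (rh_integrand a b g) \<le> mean a b (rh_integrand a b f)"
proof -
  define A B where "A = mean a b f" and "B = mean a b g"
  have A: "0 < A" and B: "0 < B"
    unfolding A_def B_def using ab f(2) g(2) pos by (auto intro!: mean_pos elim!: eventually_mono)
  define k where "k = d - ln B + 1"
  \<comment> \<open>\<open>L\<close> has mean zero because \<open>f / A\<close> and \<open>g / B\<close> both have mean one.\<close>
  define L where "L x = 0 + (- k / A) * f x + (k / B) * g x" for x
  have L: "set_integrable lborel {a..b} L" "mean a b L = 0"
    using mean_affine[OF ab f(2) g(2), of 0 "- k / A" "k / B"] A B
    unfolding L_def A_def[symmetric] B_def[symmetric] by auto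
  have bounds: "AE x\<in>{a..b} in lborel.
      - 1 \<le> rh_integrand a b g x \<and> rh_integrand a b g x - rh_integrand a b f x \<le> L x"
    using pos cross
  proof eventually_elim
    case (elim x)
    show ?case
    proof (intro impI conjI)
      assume x: "x \<in> {a..b}"
      define s t where "s = f x / A" and "t = g x / B"
      have st: "0 < s" "0 < t"
        using x elim A B by (auto simp: s_def t_def)
      show "- 1 \<le> rh_integrand a b g x"
        using x elim B by (intro rh_integrand_ge_minus_one) (auto simp: B_def)
      have ln_t: "ln t - (d - ln B) = ln (g x) - d"
        using x elim B by (simp add: t_def ln_div)
      have "0 \<le> (s - t) * (ln t - (d - ln B))"
        unfolding ln_t using x elim by (simp add: s_def t_def A_def B_def)
      then have "t * ln t \<le> s * ln s - (s - t) * k"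
        using xlnx_le_of_crossing[OF st] unfolding k_def by (simp add: add.assoc)
      then show "rh_integrand a b g x - rh_integrand a b f x \<le> L x"
        using A B unfolding rh_integrand_def L_def A_def[symmetric] B_def[symmetric] s_def t_def
        by (simp add: algebra_simps)
    qed
  qed
  show G: "set_integrable lborel {a..b} (rh_integrand a b g)"
  proof (rule set_integrable_bound)
    show "set_integrable lborel {a..b} (\<lambda>x. \<bar>rh_integrand a b f x\<bar> + \<bar>L x\<bar> + 1)"
      using F L(1) by (intro set_integral_add(1) set_integrable_abs set_integrable_const_Icc)
    show "set_borel_measurable lborel {a..b} (rh_integrand a b g)"
      unfolding set_borel_measurable_def rh_integrand_def using g(1) by measurable
    show "AE x in lborel. x \<in> {a..b} \<longrightarrow>
        norm (rh_integrand a b g x) \<le> norm (\<bar>rh_integrand a b f x\<bar> + \<bar>L x\<bar> + 1)"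
      using bounds by eventually_elim auto
  qed
  have "AE x\<in>{a..b} in lborel. rh_integrand a b g x - rh_integrand a b f x \<le> L x"
    using bounds by eventually_elim auto
  then have "mean a b (rh_integrand a b g) - mean a b (rh_integrand a b f) \<le> mean a b L"
    using mean_mono_AE[OF ab set_integral_diff(1)[OF G F] L(1)] by (simp add: mean_diff[OF G F])
  then show "mean a b (rh_integrand a b g) \<le> mean a b (rh_integrand a b f)"
    using L(2) by simp
qed

lemma min_const_crossing:
  fixes y c A C :: real
  assumes "0 < y" "0 < c" "0 < C" "C \<le> A"
  shows "0 \<le> (y / A - min c y / C) * (ln (min c y) - ln c)"
proof (cases "y \<le> c")
  case True
  have "y / A \<le> y / C"
    using assms by (auto intro!: divide_left_mono)
  then show ?thesis
    using True assms by (auto intro!: mult_nonpos_nonpos)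
qed simp

lemma max_const_crossing:
  fixes y c A B :: real
  assumes "0 < y" "0 < c" "0 < A" "A \<le> B"
  shows "0 \<le> (y / A - max c y / B) * (ln (max c y) - ln c)"
proof (cases "c \<le> y")
  case True
  have "y / B \<le> y / A"
    using assms by (auto intro!: divide_left_mono)
  then show ?thesis
    using True assms by auto
qed simp

lemma rh_integrand_min_mean_le:
  fixes w :: "real \<Rightarrow> real"
  assumes ab: "a < b" and w: "w \<in> borel_measurable lborel" "set_integrable lborel {a..b} w"
    and pos: "AE x\<in>{a..b} in lborel. 0 < w x" and c: "0 < c"
    and W: "set_integrable lborel {a..b} (rh_integrand a b w)"
  shows "set_integrable lborel {a..b} (rh_integrand a b (\<lambda>x. min c (w x)))"
    and "mean a b (rh_integrand a b (\<lambda>x. min c (w x))) \<le> mean a b (rh_integrand a b w)"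
proof -
  let ?u = "\<lambda>x. min c (w x)"
  have u: "?u \<in> borel_measurable lborel" "set_integrable lborel {a..b} ?u"
    using w by (auto intro: set_integrable_min_const)
  have pos_u: "AE x\<in>{a..b} in lborel. 0 < w x \<and> 0 < ?u x"
    using pos by eventually_elim (use c in auto)
  have C: "0 < mean a b ?u"
    using pos_u by (intro mean_pos[OF ab u(2)]) (auto elim!: eventually_mono)
  have CA: "mean a b ?u \<le> mean a b w"
    by (rule mean_mono_AE[OF ab u(2) w(2)]) simp
  have "AE x\<in>{a..b} in lborel. 0 \<le> (w x / mean a b w - ?u x / mean a b ?u) * (ln (?u x) - ln c)"
    using pos by eventually_elim (use C CA c in \<open>auto intro: min_const_crossing\<close>)
  then show "set_integrable lborel {a..b} (rh_integrand a b ?u)"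
    and "mean a b (rh_integrand a b ?u) \<le> mean a b (rh_integrand a b w)"
    using rh_integrand_mean_le[OF ab w u pos_u _ W] by auto
qed

lemma rh_integrand_max_mean_le:
  fixes w :: "real \<Rightarrow> real"
  assumes ab: "a < b" and w: "w \<in> borel_measurable lborel" "set_integrable lborel {a..b} w"
    and pos: "AE x\<in>{a..b} in lborel. 0 < w x" and c: "0 < c"
    and W: "set_integrable lborel {a..b} (rh_integrand a b w)"
  shows "set_integrable lborel {a..b} (rh_integrand a b (\<lambda>x. max c (w x)))"
    and "mean a b (rh_integrand a b (\<lambda>x. max c (w x))) \<le> mean a b (rh_integrand a b w)"
proof -
  let ?v = "\<lambda>x. max c (w x)"
  have v: "?v \<in> borel_measurable lborel" "set_integrable lborel {a..b} ?v"
    using w by (auto intro: set_integrable_max_const)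
  have pos_v: "AE x\<in>{a..b} in lborel. 0 < w x \<and> 0 < ?v x"
    using pos by eventually_elim auto
  have A: "0 < mean a b w"
    using pos by (intro mean_pos[OF ab w(2)])
  have AB: "mean a b w \<le> mean a b ?v"
    by (rule mean_mono_AE[OF ab w(2) v(2)]) simp
  have "AE x\<in>{a..b} in lborel. 0 \<le> (w x / mean a b w - ?v x / mean a b ?v) * (ln (?v x) - ln c)"
    using pos by eventually_elim (use A AB c in \<open>auto intro: max_const_crossing\<close>)
  then show "set_integrable lborel {a..b} (rh_integrand a b ?v)"
    and "mean a b (rh_integrand a b ?v) \<le> mean a b (rh_integrand a b w)"
    using rh_integrand_mean_le[OF ab w v pos_v _ W] by auto
qed

definition ainf_log :: "real \<Rightarrow> real \<Rightarrow> (real \<Rightarrow> real) \<Rightarrow> real" where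
  "ainf_log a b f = ln (mean a b f) - mean a b (\<lambda>x. ln (f x))"

lemma ln_le_tangent:
  fixes x c :: real
  assumes "0 < x" "0 < c"
  shows "ln x \<le> ln c + x / c - 1"
  using ln_le_minus_one[of "x / c"] assms by (simp add: ln_div)

lemma ln_sub_ln_min_le:
  fixes y l c :: real
  assumes y: "0 < y" and l: "0 < l" and c: "0 < c"
  shows "ln y - ln (min l y) \<le> ln c + 1 / c - 1 + 1 / (l * c) * y - 1 / (l * c) * min l y"
proof -
  have "ln y - ln (min l y) = ln (1 + (y - min l y) / l)"
  proof (cases "y \<le> l")
    case False
    then have "1 + (y - min l y) / l = y / l"
      using l by (simp add: field_simps)
    then show ?thesis
      using y l False by (simp add: ln_div min_def)
  qed simp
  also have "\<dots> \<le> ln c + (1 + (y - min l y) / l) / c - 1"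
    using y l c by (intro ln_le_tangent) (auto intro: add_pos_nonneg)
  also have "\<dots> = ln c + 1 / c - 1 + 1 / (l * c) * y - 1 / (l * c) * min l y"
    using l c by (simp add: field_simps)
  finally show ?thesis .
qed

lemma ln_sub_ln_max_le:
  fixes y m c :: real
  assumes y: "0 < y" and m: "0 < m" and c: "0 < c"
  shows "ln y - ln (max m y) \<le> 1 / (m * c) * y + (ln c - 1) / m * max m y"
proof -
  define v where "v = max m y"
  have v: "0 < v"
    using m by (simp add: v_def)
  have "ln y - ln v = v / m * (ln y - ln v)"
    using m by (cases "m \<le> y") (auto simp: v_def)
  also have "\<dots> \<le> v / m * (ln c + (y / v) / c - 1)"
    using y v m c ln_le_tangent[of "y / v" c] by (intro mult_left_mono) (auto simp: ln_div)
  also have "\<dots> = 1 / (m * c) * y + (ln c - 1) / m * v"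
    using v m c by (simp add: field_simps)
  finally show ?thesis
    unfolding v_def .
qed

lemma ainf_log_min_le:
  fixes w :: "real \<Rightarrow> real"
  assumes ab: "a < b" and w: "w \<in> borel_measurable lborel" "set_integrable lborel {a..b} w"
    and pos: "AE x\<in>{a..b} in lborel. 0 < w x" and c: "0 < c"
    and lw: "set_integrable lborel {a..b} (\<lambda>x. ln (w x))"
  shows "set_integrable lborel {a..b} (\<lambda>x. ln (min c (w x)))"
    and "ainf_log a b (\<lambda>x. min c (w x)) \<le> ainf_log a b w"
proof -
  let ?u = "\<lambda>x. min c (w x)"
  have u: "set_integrable lborel {a..b} ?u"
    using w by (rule set_integrable_min_const)
  define A C where "A = mean a b w" and "C = mean a b ?u"
  have C: "0 < C"
    unfolding C_def using pos c by (intro mean_pos[OF ab u]) (auto elim!: eventually_mono)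
  have CA: "C \<le> A"
    unfolding A_def C_def by (rule mean_mono_AE[OF ab u w(2)]) simp
  have Cc: "C \<le> c"
    unfolding C_def using mean_mono_AE[OF ab u set_integrable_const_Icc, of c] mean_const[OF ab] by simp
  show lu: "set_integrable lborel {a..b} (\<lambda>x. ln (?u x))"
  proof (rule set_integrable_bound)
    show "set_integrable lborel {a..b} (\<lambda>x. \<bar>ln (w x)\<bar> + \<bar>ln c\<bar>)"
      using lw by (intro set_integral_add(1) set_integrable_abs set_integrable_const_Icc)
    show "set_borel_measurable lborel {a..b} (\<lambda>x. ln (?u x))"
      unfolding set_borel_measurable_def using w(1) by measurable
    show "AE x in lborel. x \<in> {a..b} \<longrightarrow> norm (ln (?u x)) \<le> norm (\<bar>ln (w x)\<bar> + \<bar>ln c\<bar>)"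
      using pos by eventually_elim (auto simp: min_def)
  qed
  define k where "k = A / C"
  have k: "0 < k"
    using C CA by (simp add: k_def)
  have "mean a b (\<lambda>x. ln (w x) - ln (?u x))
      \<le> mean a b (\<lambda>x. (ln k + 1 / k - 1) + 1 / (c * k) * w x + - 1 / (c * k) * ?u x)"
    using pos ln_sub_ln_min_le[OF _ c k]
    by (intro mean_mono_AE[OF ab set_integral_diff(1)[OF lw lu] mean_affine(1)[OF ab w(2) u]])
      (auto elim!: eventually_mono)
  also have "\<dots> = ln k + (1 + (A - C) / c) / k - 1"
    unfolding mean_affine(2)[OF ab w(2) u] A_def[symmetric] C_def[symmetric] using c k
    by (simp add: field_simps)
  also have "\<dots> \<le> ln k"
  proof -
    have "C * (A - C) \<le> c * (A - C)"
      using CA Cc by (intro mult_right_mono) auto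
    then have "C * ((A - C) / c) \<le> A - C"
      using c by (simp add: pos_divide_le_eq mult.commute)
    then show ?thesis
      using C k unfolding k_def by (simp add: field_simps)
  qed
  finally show "ainf_log a b ?u \<le> ainf_log a b w"
    using C CA unfolding ainf_log_def mean_diff[OF lw lu] k_def A_def[symmetric] C_def[symmetric]
    by (simp add: ln_div)
qed

lemma ainf_log_max_le:
  fixes w :: "real \<Rightarrow> real"
  assumes ab: "a < b" and w: "w \<in> borel_measurable lborel" "set_integrable lborel {a..b} w"
    and pos: "AE x\<in>{a..b} in lborel. 0 < w x" and c: "0 < c"
    and lw: "set_integrable lborel {a..b} (\<lambda>x. ln (w x))"
  shows "set_integrable lborel {a..b} (\<lambda>x. ln (max c (w x)))"
    and "ainf_log a b (\<lambda>x. max c (w x)) \<le> ainf_log a b w"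
proof -
  let ?v = "\<lambda>x. max c (w x)"
  have v: "set_integrable lborel {a..b} ?v"
    using w by (rule set_integrable_max_const)
  define A B where "A = mean a b w" and "B = mean a b ?v"
  have A: "0 < A"
    unfolding A_def using pos by (rule mean_pos[OF ab w(2)])
  have AB: "A \<le> B"
    unfolding A_def B_def by (rule mean_mono_AE[OF ab w(2) v]) simp
  have cB: "c \<le> B"
    unfolding B_def using mean_mono_AE[OF ab set_integrable_const_Icc v, of c] mean_const[OF ab] by simp
  show lv: "set_integrable lborel {a..b} (\<lambda>x. ln (?v x))"
  proof (rule set_integrable_bound)
    show "set_integrable lborel {a..b} (\<lambda>x. \<bar>ln (w x)\<bar> + \<bar>ln c\<bar>)"
      using lw by (intro set_integral_add(1) set_integrable_abs set_integrable_const_Icc)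
    show "set_borel_measurable lborel {a..b} (\<lambda>x. ln (?v x))"
      unfolding set_borel_measurable_def using w(1) by measurable
    show "AE x in lborel. x \<in> {a..b} \<longrightarrow> norm (ln (?v x)) \<le> norm (\<bar>ln (w x)\<bar> + \<bar>ln c\<bar>)"
      using pos by eventually_elim (auto simp: max_def)
  qed
  define k where "k = A / B"
  have k: "0 < k" "ln k \<le> 0"
    using A AB by (auto simp: k_def)
  have "mean a b (\<lambda>x. ln (w x) - ln (?v x))
      \<le> mean a b (\<lambda>x. 0 + 1 / (c * k) * w x + (ln k - 1) / c * ?v x)"
    using pos ln_sub_ln_max_le[OF _ c k(1)]
    by (intro mean_mono_AE[OF ab set_integral_diff(1)[OF lw lv] mean_affine(1)[OF ab w(2) v]])
      (auto elim!: eventually_mono)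
  also have "\<dots> = B / c * ln k"
    unfolding mean_affine(2)[OF ab w(2) v] A_def[symmetric] B_def[symmetric] using c k A AB
    by (simp add: k_def field_simps)
  also have "\<dots> \<le> ln k"
    using k(2) cB c mult_right_mono_neg[of 1 "B / c" "ln k"] by simp
  finally show "ainf_log a b ?v \<le> ainf_log a b w"
    using A AB unfolding ainf_log_def mean_diff[OF lw lv] k_def A_def[symmetric] B_def[symmetric]
    by (simp add: ln_div)
qed

definition rh_avg :: "real \<Rightarrow> real \<Rightarrow> (real \<Rightarrow> real) \<Rightarrow> ereal" where
  "rh_avg a b f = avg a b (\<lambda>t. (f t / real_of_ereal (avg a b f)) * ln (f t / real_of_ereal (avg a b f)))"

definition ainf_avg :: "real \<Rightarrow> real \<Rightarrow> (real \<Rightarrow> real) \<Rightarrow> ereal" where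
  "ainf_avg a b f = (let L = avg a b (\<lambda>t. ln (f t)) in
     if L = - \<infinity> then \<infinity> else avg a b f * ereal (exp (- real_of_ereal L)))"

lemma RH1_const_eq_SUP_rh_avg: "RH1_const w = (SUP (a, b) \<in> {(a, b). a < b}. rh_avg a b w)"
  by (simp add: RH1_const_def rh_avg_def)

lemma Ainf_const_eq_SUP_ainf_avg: "Ainf_const w = (SUP (a, b) \<in> {(a, b). a < b}. ainf_avg a b w)"
  by (simp add: Ainf_const_def ainf_avg_def)

lemma rh_avg_eq_avg_rh_integrand:
  "a < b \<Longrightarrow> set_integrable lborel {a..b} f \<Longrightarrow> rh_avg a b f = avg a b (rh_integrand a b f)"
  by (simp add: rh_avg_def rh_integrand_def[abs_def] avg_eq_mean)

lemma ainf_avg_eq_exp_ainf_log: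
  assumes "a < b" "set_integrable lborel {a..b} f" "set_integrable lborel {a..b} (\<lambda>x. ln (f x))"
    and "0 < mean a b f"
  shows "ainf_avg a b f = ereal (exp (ainf_log a b f))"
  using assms by (simp add: ainf_avg_def ainf_log_def avg_eq_mean exp_diff exp_minus field_simps)

lemma trunc_eq_max_min: "trunc n w = (\<lambda>x. max (1 / real n) (min (real n) (w x)))"
  by (simp add: trunc_def[abs_def])

lemma rh_avg_trunc_le:
  fixes w :: "real \<Rightarrow> real"
  assumes ab: "a < b" and w: "w \<in> borel_measurable lborel" "set_integrable lborel {a..b} w"
    and pos: "AE x\<in>{a..b} in lborel. 0 < w x" and n: "0 < n"
  shows "rh_avg a b (trunc n w) \<le> rh_avg a b w"
proof (cases "set_integrable lborel {a..b} (rh_integrand a b w)")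
  case True
  let ?u = "\<lambda>x. min (real n) (w x)"
  have u: "?u \<in> borel_measurable lborel" "set_integrable lborel {a..b} ?u"
    using w by (auto intro: set_integrable_min_const)
  have pos_u: "AE x\<in>{a..b} in lborel. 0 < ?u x"
    using pos n by (auto elim!: eventually_mono)
  note U = rh_integrand_min_mean_le[OF ab w pos _ True, of "real n"]
  note V = rh_integrand_max_mean_le[OF ab u pos_u _ U(1), of "1 / real n"]
  have v: "set_integrable lborel {a..b} (trunc n w)"
    unfolding trunc_eq_max_min using u by (rule set_integrable_max_const)
  show ?thesis
    using U V n
    unfolding rh_avg_eq_avg_rh_integrand[OF ab w(2)] rh_avg_eq_avg_rh_integrand[OF ab v]
    by (simp add: avg_eq_mean[OF ab] True trunc_eq_max_min)
next
  case False
  have A: "0 < mean a b w"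
    using pos by (rule mean_pos[OF ab w(2)])
  have "ext_int {a..b} (rh_integrand a b w) = \<infinity>"
  proof (rule ext_int_eq_PInfty[OF _ False set_integrable_const_Icc])
    show "set_borel_measurable lborel {a..b} (rh_integrand a b w)"
      unfolding set_borel_measurable_def rh_integrand_def using w(1) by measurable
    show "AE x\<in>{a..b} in lborel. - 1 \<le> rh_integrand a b w x"
      using pos by eventually_elim (use A in \<open>auto intro: rh_integrand_ge_minus_one\<close>)
  qed
  then show ?thesis
    using ab by (simp add: rh_avg_eq_avg_rh_integrand[OF ab w(2)] avg_def)
qed

lemma ainf_avg_trunc_le:
  fixes w :: "real \<Rightarrow> real"
  assumes ab: "a < b" and w: "w \<in> borel_measurable lborel" "set_integrable lborel {a..b} w"
    and pos: "AE x\<in>{a..b} in lborel. 0 < w x" and n: "0 < n"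
  shows "ainf_avg a b (trunc n w) \<le> ainf_avg a b w"
proof (cases "set_integrable lborel {a..b} (\<lambda>x. ln (w x))")
  case True
  let ?u = "\<lambda>x. min (real n) (w x)"
  have u: "?u \<in> borel_measurable lborel" "set_integrable lborel {a..b} ?u"
    using w by (auto intro: set_integrable_min_const)
  have pos_u: "AE x\<in>{a..b} in lborel. 0 < ?u x"
    using pos n by (auto elim!: eventually_mono)
  note U = ainf_log_min_le[OF ab w pos _ True, of "real n"]
  note V = ainf_log_max_le[OF ab u pos_u _ U(1), of "1 / real n"]
  have v: "set_integrable lborel {a..b} (trunc n w)"
    unfolding trunc_eq_max_min using u by (rule set_integrable_max_const)
  have "0 < mean a b (trunc n w)"
    using pos_u n unfolding trunc_eq_max_min
    by (intro mean_pos[OF ab]) (auto intro: set_integrable_max_const[OF u] elim!: eventually_mono)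
  then show ?thesis
    using U V n v True
    by (simp add: ainf_avg_eq_exp_ainf_log[OF ab] mean_pos[OF ab w(2) pos] trunc_eq_max_min w(2))
next
  case False
  have "ext_int {a..b} (\<lambda>x. ln (w x)) = - \<infinity>"
  proof (rule ext_int_eq_MInfty[OF _ False w(2)])
    show "set_borel_measurable lborel {a..b} (\<lambda>x. ln (w x))"
      unfolding set_borel_measurable_def using w(1) by measurable
    show "AE x\<in>{a..b} in lborel. ln (w x) \<le> w x"
      using pos by eventually_elim (auto intro: ln_le_minus_one[THEN order_trans])
  qed
  then show ?thesis
    using ab by (simp add: ainf_avg_def avg_def)
qed

theorem lemma1:
  fixes w :: "real \<Rightarrow> real" and n :: nat
  assumes "weight w" and "n \<ge> 1"
  shows "(RH1 w \<longrightarrow> RH1_const (trunc n w) \<le> RH1_const w)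
       \<and> (Ainf w \<longrightarrow> Ainf_const (trunc n w) \<le> Ainf_const w)"
proof -
  have w: "w \<in> borel_measurable lborel" "\<And>a b. set_integrable lborel {a..b} w"
    and pos: "\<And>a b. AE x\<in>{a..b} in lborel. 0 < w x"
    using assms(1) unfolding weight_def by (auto elim!: eventually_mono)
  have n: "0 < n"
    using assms(2) by simp
  \<comment> \<open>The comparison holds interval by interval.\<close>
  have "RH1_const (trunc n w) \<le> RH1_const w"
    unfolding RH1_const_eq_SUP_rh_avg
    by (rule SUP_subset_mono[OF order_refl]) (auto intro: rh_avg_trunc_le[OF _ w pos n])
  moreover have "Ainf_const (trunc n w) \<le> Ainf_const w"
    unfolding Ainf_const_eq_SUP_ainf_avg
    by (rule SUP_subset_mono[OF order_refl]) (auto intro: ainf_avg_trunc_le[OF _ w pos n])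
  ultimately show ?thesis
    by simp
qed

end
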